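(* Let $f:\mathbb{R}^m\times\mathbb{R}^n\to\mathbb{R}$ satisfy the standing assumption described in the context, and let $\kappa=L_1/\mu$. Define $G(x,y)=\big[\nabla_{11} f - \nabla_{12} f (\nabla_{22} f)^{-1} \nabla_{21} f\big](x,y)$. Then: (1) $G$ is Lipschitz continuous on $\mathbb{R}^{m+n}$ (with respect to the Euclidean norm on $(x,y)$ and the spectral norm on matrices) with constant $L_G=L_2(1+\kappa)^2$; (2) the envelope function $\Phi(x)=\max_{y\in\mathbb{R}^n} f(x,y)$ is twice differentiable with $\nabla^2\Phi(x)=G(x,y^*(x))$ for all $x\in\mathbb{R}^m$, where $y^*(x)=\arg\max_{y} f(x,y)$, and $\nabla^2\Phi$ is Lipschitz continuous with constant $L_\Phi=L_G(1+\kappa)=L_2(1+\kappa)^3$.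
   Context: Standing assumption: $f:\mathbb{R}^m\times\mathbb{R}^n\to\mathbb{R}$ is twice continuously differentiable and (i) $\nabla f$ is $L_1$-Lipschitz on $\mathbb{R}^{m+n}$, and for every fixed $x$ the map $y\mapsto f(x,y)$ is $\mu$-strongly concave ($\mu>0$); (ii) the Jacobian blocks $\nabla_{11} f,\nabla_{12} f,\nabla_{21} f,\nabla_{22} f$, viewed as functions of $(x,y)$, are $L_2$-Lipschitz (Euclidean norm on $(x,y)$, spectral norm on matrices); (iii) $\Phi(x):=\max_{y\in\mathbb{R}^n}f(x,y)$ is bounded below and has compact sub-level sets. Notation: $\nabla_1 f,\nabla_2 f$ are the partial gradients in $x$ and $y$; $\nabla_{11}f$, $\nabla_{22}f$ are the partial Hessians in $x$ and $y$; $\nabla_{12}f\in\mathbb{R}^{m\times n}$ is the Jacobian of $\nabla_1 f$ with respect to $y$ and $\nabla_{21}f\in\mathbb{R}^{n\times m}$ is the Jacobian of $\nabla_2 f$ with respect to $x$. By strong concavity, $y^*(x)=\arg\max_y f(x,y)$ is unique, and $\nabla_{22}f$ is invertible. *)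

theory Defs
  imports "HOL-Analysis.Analysis"
begin

definition spec_norm :: "real^'n^'m \<Rightarrow> real" where
  "spec_norm A = onorm (\<lambda>v. A *v v)"

definition strongly_concave_on :: "real \<Rightarrow> 'a::real_normed_vector set \<Rightarrow> ('a \<Rightarrow> real) \<Rightarrow> bool" where
  "strongly_concave_on mu S g \<longleftrightarrow> convex S \<and>
     (\<forall>u\<in>S. \<forall>v\<in>S. \<forall>t::real. 0 \<le> t \<and> t \<le> 1 \<longrightarrow>
        g (t *\<^sub>R u + (1 - t) *\<^sub>R v) \<ge> t * g u + (1 - t) * g v + mu / 2 * t * (1 - t) * (norm (u - v))\<^sup>2)"

definition envelope :: "('a \<Rightarrow> 'b \<Rightarrow> real) \<Rightarrow> 'a \<Rightarrow> real" where
  "envelope f x = (SUP y. f x y)"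

definition argmax_y :: "('a \<Rightarrow> 'b \<Rightarrow> real) \<Rightarrow> 'a \<Rightarrow> 'b" where
  "argmax_y f x = (THE y. \<forall>y'. f x y' \<le> f x y)"

end

theory Submission
  imports Defs
begin

(* Strong concavity of f(x, .) makes the partial gradient g2(x, .) strongly monotone, so
   H22 <= -mu I: H22 is invertible with norm of the inverse at most 1/mu, while the Lipschitz
   gradient bounds H12 and H21 by L1. Expanding the difference of two Schur complements
   H11 - H12 H22^-1 H21 with the resolvent identity A^-1 - B^-1 = A^-1 (B - A) B^-1 gives
   the constant L2 (1 + kappa)^2.
   Strong concavity also makes f(x, .) coercive, so the maximiser y*(x) exists and is the root
   of g2(x, .); strong monotonicity makes y* kappa-Lipschitz, and this a priori bound suffices
   to differentiate the identity g2(x, y*(x)) = 0, giving Dy* = -H22^-1 H21. By the chain rule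
   the gradient of Phi is g1(x, y*(x)), whose derivative is the Schur complement at (x, y*(x));
   composing with the (1 + kappa)-Lipschitz map x |-> (x, y*(x)) yields L2 (1 + kappa)^3. *)

lemma spec_norm_nonneg: "0 \<le> spec_norm A"
  unfolding spec_norm_def by (simp add: onorm_pos_le)

lemma norm_matrix_vector_mult_le: "norm (A *v v) \<le> spec_norm A * norm v"
  unfolding spec_norm_def by (simp add: onorm)

lemma spec_norm_le: "(\<And>v. norm (A *v v) \<le> c * norm v) \<Longrightarrow> spec_norm A \<le> c"
  unfolding spec_norm_def by (rule onorm_le)

lemma spec_norm_add_le: "spec_norm (A + B) \<le> spec_norm A + spec_norm B"
  unfolding spec_norm_def matrix_vector_mult_add_rdistrib by (simp add: onorm_triangle)

lemma spec_norm_minus_commute: "spec_norm (A - B) = spec_norm (B - A)"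
proof -
  have "(\<lambda>v. (B - A) *v v) = (\<lambda>v. - ((A - B) *v v))"
    by (simp add: fun_eq_iff matrix_vector_mult_diff_rdistrib)
  then show ?thesis
    unfolding spec_norm_def by (simp add: onorm_neg)
qed

lemma spec_norm_diff_le: "spec_norm (A - B) \<le> spec_norm A + spec_norm B"
proof (rule spec_norm_le)
  fix v
  show "norm ((A - B) *v v) \<le> (spec_norm A + spec_norm B) * norm v"
    using norm_triangle_ineq4[of "A *v v" "B *v v"]
      norm_matrix_vector_mult_le[of A v] norm_matrix_vector_mult_le[of B v]
    by (simp add: matrix_vector_mult_diff_rdistrib distrib_right)
qed

lemma spec_norm_mult_le: "spec_norm (A ** B) \<le> spec_norm A * spec_norm B"
proof -
  have "(\<lambda>v. (A ** B) *v v) = (\<lambda>v. A *v v) \<circ> (\<lambda>v. B *v v)"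
    by (simp add: fun_eq_iff matrix_vector_mul_assoc)
  then show ?thesis
    unfolding spec_norm_def by (simp add: onorm_compose)
qed

lemma spec_norm_mult_le_mono:
  "spec_norm A \<le> a \<Longrightarrow> spec_norm B \<le> b \<Longrightarrow> spec_norm (A ** B) \<le> a * b"
  by (meson mult_mono order_trans spec_norm_mult_le spec_norm_nonneg)

lemma matrix_diff_ldistrib: "(A::'a::ring_1^'n^'m) ** (B - C) = A ** B - A ** C"
  by (vector matrix_matrix_mult_def sum_subtractf right_diff_distrib)

lemma matrix_diff_rdistrib: "((A::'a::ring_1^'n^'m) - B) ** C = A ** C - B ** C"
  by (vector matrix_matrix_mult_def sum_subtractf left_diff_distrib)

lemma matrix_vector_mult_uminus_right: "(A::'a::ring_1^'n^'m) *v (- x) = - (A *v x)"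
  by (metis diff_0 matrix_vector_mult_0_right matrix_vector_mult_diff_distrib)

lemma
  assumes "invertible A"
  shows matrix_inv_right: "A ** matrix_inv A = mat 1"
    and matrix_inv_left: "matrix_inv A ** A = mat 1"
  using someI_ex[OF assms[unfolded invertible_def]] unfolding matrix_inv_def by auto

lemma matrix_inv_diff:
  fixes A B :: "'a::ring_1^'n^'n"
  assumes "invertible A" "invertible B"
  shows "matrix_inv A - matrix_inv B = matrix_inv A ** (B - A) ** matrix_inv B"
  using assms
  by (simp add: matrix_diff_ldistrib matrix_diff_rdistrib matrix_inv_left matrix_inv_right
      flip: matrix_mul_assoc)

lemma spec_norm_schur_complement_diff_le:
  fixes A A' :: "real^'m^'p" and B B' :: "real^'n^'p" and H H' :: "real^'n^'n"
    and D D' :: "real^'m^'n"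
  assumes inv: "invertible H" "invertible H'"
    and dA: "spec_norm (A - A') \<le> a" and dB: "spec_norm (B - B') \<le> a"
    and dH: "spec_norm (H - H') \<le> a" and dD: "spec_norm (D - D') \<le> a"
    and nC: "spec_norm (matrix_inv H) \<le> c" and nC': "spec_norm (matrix_inv H') \<le> c"
    and nB': "spec_norm B' \<le> l" and nD: "spec_norm D \<le> l"
  shows "spec_norm ((A - B ** matrix_inv H ** D) - (A' - B' ** matrix_inv H' ** D'))
           \<le> a * (1 + c * l)\<^sup>2"
proof -
  define C C' where "C = matrix_inv H" and "C' = matrix_inv H'"
  have "spec_norm (H' - H) \<le> a"
    using dH by (simp add: spec_norm_minus_commute)
  then have "spec_norm (C ** (H' - H) ** C') \<le> c * a * c"
    using nC nC' by (simp add: C_def C'_def spec_norm_mult_le_mono)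
  then have dC: "spec_norm (C - C') \<le> c * a * c"
    unfolding C_def C'_def matrix_inv_diff[OF inv] .
  have split: "B ** C ** D - B' ** C' ** D'
      = ((B - B') ** C ** D + B' ** (C - C') ** D) + B' ** C' ** (D - D')"
    by (simp add: matrix_diff_ldistrib matrix_diff_rdistrib)
  have "spec_norm ((B - B') ** C ** D) \<le> a * c * l"
    using dB nC nD by (simp add: C_def spec_norm_mult_le_mono)
  moreover have "spec_norm (B' ** (C - C') ** D) \<le> l * (c * a * c) * l"
    using nB' dC nD by (simp add: spec_norm_mult_le_mono)
  moreover have "spec_norm (B' ** C' ** (D - D')) \<le> l * c * a"
    using nB' nC' dD by (simp add: C'_def spec_norm_mult_le_mono)
  ultimately have "spec_norm (B ** C ** D - B' ** C' ** D')
      \<le> (a * c * l + l * (c * a * c) * l) + l * c * a"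
    unfolding split by (meson add_mono order_trans spec_norm_add_le)
  then have "spec_norm ((A - A') - (B ** C ** D - B' ** C' ** D'))
      \<le> a + ((a * c * l + l * (c * a * c) * l) + l * c * a)"
    using dA by (meson add_mono order_trans spec_norm_diff_le)
  also have "\<dots> = a * (1 + c * l)\<^sup>2"
    by (simp add: power2_eq_square algebra_simps)
  finally show ?thesis
    by (simp add: C_def C'_def algebra_simps)
qed

lemma has_real_derivative_le_of_difference_le:
  fixes \<psi> :: "real \<Rightarrow> real"
  assumes d: "(\<psi> has_real_derivative D) (at 0)"
    and le: "\<And>t. 0 < t \<Longrightarrow> t < 1 \<Longrightarrow> \<psi> t - \<psi> 0 \<le> t * c t"
    and c: "(c \<longlongrightarrow> c0) (at_right 0)"
  shows "D \<le> c0"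
proof -
  have "((\<lambda>t. (\<psi> t - \<psi> 0) / (t - 0)) \<longlongrightarrow> D) (at 0)"
    using d by (simp add: has_field_derivative_iff)
  then have quotient: "((\<lambda>t. (\<psi> t - \<psi> 0) / t) \<longlongrightarrow> D) (at_right 0)"
    by (simp add: filterlim_at_split)
  have "eventually (\<lambda>t. (\<psi> t - \<psi> 0) / t \<le> c t) (at_right 0)"
    unfolding eventually_at_right_field
    using le by (intro exI[of _ 1]) (auto simp: divide_le_eq mult.commute)
  then show ?thesis
    by (rule tendsto_le[OF _ c quotient, rotated]) simp
qed

lemma has_real_derivative_along_line:
  fixes h :: "'a::real_normed_vector \<Rightarrow> real"
  assumes "(h has_derivative h') (at u)"
  shows "((\<lambda>t. h (u + t *\<^sub>R w)) has_real_derivative h' w) (at 0)"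
proof -
  have "((\<lambda>t::real. u + t *\<^sub>R w) has_derivative (\<lambda>t. t *\<^sub>R w)) (at 0)"
    by (auto intro!: derivative_eq_intros)
  from has_derivative_compose[OF this] assms
  have "((\<lambda>t. h (u + t *\<^sub>R w)) has_derivative (\<lambda>t. h' (t *\<^sub>R w))) (at 0)"
    by simp
  moreover have "(\<lambda>t. h' (t *\<^sub>R w)) = (*) (h' w)"
    using linear_cmul[OF has_derivative_linear[OF assms]] by (auto simp: mult.commute)
  ultimately show ?thesis
    by (simp add: has_field_derivative_def)
qed

lemma has_derivative_partial_snd:
  assumes "((\<lambda>(u, v). F u v) has_derivative D) (at (x, y))"
  shows "(F x has_derivative (\<lambda>k. D (0, k))) (at y)"
proof -
  have "((\<lambda>k. (x, k)) has_derivative (\<lambda>k. (0, k))) (at y)"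
    by (auto intro!: derivative_eq_intros)
  from has_derivative_compose[OF this assms] show ?thesis
    by simp
qed

lemma lipschitz_on_UNIV_derivative_le:
  fixes F :: "'a::real_normed_vector \<Rightarrow> 'b::real_inner"
  assumes d: "(F has_derivative D) (at p)" and lip: "L-lipschitz_on UNIV F"
  shows "norm (D w) \<le> L * norm w"
proof -
  have "((\<lambda>q. F q \<bullet> D w) has_derivative (\<lambda>q. D q \<bullet> D w)) (at p)"
    using d by (auto intro!: derivative_eq_intros)
  then have "((\<lambda>t. F (p + t *\<^sub>R w) \<bullet> D w) has_real_derivative D w \<bullet> D w) (at 0)"
    by (rule has_real_derivative_along_line)
  then have "D w \<bullet> D w \<le> L * norm w * norm (D w)"
  proof (rule has_real_derivative_le_of_difference_le)
    fix t :: real assume t: "0 < t" "t < 1"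
    have "F (p + t *\<^sub>R w) \<bullet> D w - F (p + 0 *\<^sub>R w) \<bullet> D w
        = (F (p + t *\<^sub>R w) - F p) \<bullet> D w"
      by (simp add: inner_diff_left)
    also have "\<dots> \<le> norm (F (p + t *\<^sub>R w) - F p) * norm (D w)"
      by (rule norm_cauchy_schwarz)
    also have "\<dots> \<le> L * norm (t *\<^sub>R w) * norm (D w)"
      using lipschitz_onD[OF lip, of "p + t *\<^sub>R w" p] by (simp add: dist_norm mult_right_mono)
    also have "\<dots> = t * (L * norm w * norm (D w))"
      using t by simp
    finally show "F (p + t *\<^sub>R w) \<bullet> D w - F (p + 0 *\<^sub>R w) \<bullet> D w
        \<le> t * (L * norm w * norm (D w))" .
  qed simp
  then have "norm (D w) * norm (D w) \<le> (L * norm w) * norm (D w)"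
    by (simp add: dot_square_norm power2_eq_square)
  then show ?thesis
    by (cases "D w = 0") (use lipschitz_on_nonneg[OF lip] in auto)
qed

lemma strongly_concave_onD:
  assumes "strongly_concave_on \<mu> UNIV g" "0 \<le> t" "t \<le> 1"
  shows "t * g u + (1 - t) * g v + \<mu> / 2 * t * (1 - t) * (norm (u - v))\<^sup>2
           \<le> g (t *\<^sub>R u + (1 - t) *\<^sub>R v)"
  using assms unfolding strongly_concave_on_def by blast

lemma strongly_concave_gradient_le:
  fixes g :: "'a::real_inner \<Rightarrow> real"
  assumes sc: "strongly_concave_on \<mu> UNIV g"
    and dg: "(g has_derivative (\<lambda>k. Dg \<bullet> k)) (at u)"
  shows "g v \<le> g u + Dg \<bullet> (v - u) - \<mu> / 2 * (norm (v - u))\<^sup>2"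
proof -
  have "((\<lambda>t. - g (u + t *\<^sub>R (v - u))) has_real_derivative - (Dg \<bullet> (v - u))) (at 0)"
    using dg by (intro DERIV_minus has_real_derivative_along_line)
  then have "- (Dg \<bullet> (v - u)) \<le> - (g v - g u + \<mu> / 2 * (1 - 0) * (norm (v - u))\<^sup>2)"
  proof (rule has_real_derivative_le_of_difference_le)
    fix t :: real assume "0 < t" "t < 1"
    moreover have "t *\<^sub>R v + (1 - t) *\<^sub>R u = u + t *\<^sub>R (v - u)"
      by (simp add: algebra_simps)
    ultimately show "- g (u + t *\<^sub>R (v - u)) - - g (u + 0 *\<^sub>R (v - u))
        \<le> t * - (g v - g u + \<mu> / 2 * (1 - t) * (norm (v - u))\<^sup>2)"
      using strongly_concave_onD[OF sc, of t v u] by (simp add: algebra_simps)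
  qed (intro tendsto_intros)
  then show ?thesis
    by simp
qed

lemma strongly_concave_gradient_monotone:
  fixes g :: "'a::real_inner \<Rightarrow> real"
  assumes sc: "strongly_concave_on \<mu> UNIV g"
    and dg: "\<And>y. (g has_derivative (\<lambda>k. Dg y \<bullet> k)) (at y)"
  shows "(Dg v - Dg u) \<bullet> (v - u) \<le> - \<mu> * (norm (v - u))\<^sup>2"
  using strongly_concave_gradient_le[OF sc dg[of u], of v]
    strongly_concave_gradient_le[OF sc dg[of v], of u]
  by (simp add: norm_minus_commute inner_diff_left inner_diff_right algebra_simps)

lemma strongly_monotone_derivative_le:
  fixes F :: "'a::real_inner \<Rightarrow> 'a"
  assumes mono: "\<And>u v. (F v - F u) \<bullet> (v - u) \<le> - \<mu> * (norm (v - u))\<^sup>2"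
    and dF: "(F has_derivative F') (at y)"
  shows "F' v \<bullet> v \<le> - \<mu> * (norm v)\<^sup>2"
proof -
  have "((\<lambda>z. F z \<bullet> v) has_derivative (\<lambda>k. F' k \<bullet> v)) (at y)"
    using dF by (auto intro!: derivative_eq_intros)
  then have "((\<lambda>t. F (y + t *\<^sub>R v) \<bullet> v) has_real_derivative F' v \<bullet> v) (at 0)"
    by (rule has_real_derivative_along_line)
  then show ?thesis
  proof (rule has_real_derivative_le_of_difference_le[where c = "\<lambda>_. - \<mu> * (norm v)\<^sup>2"])
    fix t :: real assume t: "0 < t" "t < 1"
    have "t * ((F (y + t *\<^sub>R v) - F y) \<bullet> v) \<le> t * (t * (- \<mu> * (norm v)\<^sup>2))"
      using mono[of y "y + t *\<^sub>R v"] t by (simp add: power2_eq_square algebra_simps)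
    then have "(F (y + t *\<^sub>R v) - F y) \<bullet> v \<le> t * (- \<mu> * (norm v)\<^sup>2)"
      using t(1) by (rule mult_left_le_imp_le)
    then show "F (y + t *\<^sub>R v) \<bullet> v - F (y + 0 *\<^sub>R v) \<bullet> v \<le> t * (- \<mu> * (norm v)\<^sup>2)"
      by (simp add: inner_diff_left)
  qed simp
qed

lemma norm_ge_of_inner_le:
  fixes w v :: "'a::real_inner"
  assumes "w \<bullet> v \<le> - \<mu> * (norm v)\<^sup>2"
  shows "\<mu> * norm v \<le> norm w"
proof (cases "v = 0")
  case False
  have "(\<mu> * norm v) * norm v \<le> - (w \<bullet> v)"
    using assms by (simp add: power2_eq_square)
  also have "\<dots> \<le> norm w * norm v"
    using Cauchy_Schwarz_ineq2[of w v] by linarith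
  finally show ?thesis
    using False by simp
qed simp

lemma
  fixes A :: "real^'n^'n"
  assumes "0 < \<mu>" and lower: "\<And>v. \<mu> * norm v \<le> norm (A *v v)"
  shows invertible_of_norm_lower_bound: "invertible A"
    and spec_norm_matrix_inv_le: "spec_norm (matrix_inv A) \<le> 1 / \<mu>"
proof -
  have "inj ((*v) A)"
  proof (rule injI)
    fix u v assume "A *v u = A *v v"
    then have "\<mu> * norm (u - v) \<le> 0"
      using lower[of "u - v"] by (simp add: matrix_vector_mult_diff_distrib)
    then show "u = v"
      using \<open>0 < \<mu>\<close> by (simp add: mult_le_0_iff)
  qed
  then show inv: "invertible A"
    using matrix_left_invertible_injective invertible_left_inverse by blast
  show "spec_norm (matrix_inv A) \<le> 1 / \<mu>"
  proof (rule spec_norm_le)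
    fix w
    have "A *v (matrix_inv A *v w) = w"
      by (simp add: matrix_vector_mul_assoc matrix_inv_right[OF inv])
    then have "\<mu> * norm (matrix_inv A *v w) \<le> norm w"
      using lower[of "matrix_inv A *v w"] by simp
    then show "norm (matrix_inv A *v w) \<le> 1 / \<mu> * norm w"
      using \<open>0 < \<mu>\<close> by (simp add: field_simps)
  qed
qed

lemma strongly_concave_has_max:
  fixes g :: "'a::euclidean_space \<Rightarrow> real"
  assumes sc: "strongly_concave_on \<mu> UNIV g" and "0 < \<mu>"
    and dg: "\<And>y. (g has_derivative (\<lambda>k. Dg y \<bullet> k)) (at y)"
  shows "\<exists>y. \<forall>y'. g y' \<le> g y"
proof -
  (* Beyond radius R the gradient inequality at 0 forces g v < g 0. *)
  define R where "R = 2 * norm (Dg 0) / \<mu>"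
  have "0 \<le> R"
    using \<open>0 < \<mu>\<close> by (simp add: R_def)
  moreover have "continuous_on (cball 0 R) g"
    using dg has_derivative_continuous continuous_at_imp_continuous_on by blast
  ultimately obtain y0 where "y0 \<in> cball 0 R" and y0: "\<And>y. y \<in> cball 0 R \<Longrightarrow> g y \<le> g y0"
    using continuous_attains_sup[of "cball 0 R" g] by auto
  have "g v \<le> g y0" for v
  proof (cases "norm v \<le> R")
    case False
    then have "norm (Dg 0) - \<mu> / 2 * norm v < 0" and "0 < norm v"
      using \<open>0 < \<mu>\<close> \<open>0 \<le> R\<close> by (auto simp: R_def field_simps)
    then have "norm v * (norm (Dg 0) - \<mu> / 2 * norm v) < 0"
      by (simp add: mult_pos_neg)
    moreover have "g v \<le> g 0 + Dg 0 \<bullet> v - \<mu> / 2 * (norm v)\<^sup>2"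
      using strongly_concave_gradient_le[OF sc dg[of 0], of v] by simp
    moreover have "Dg 0 \<bullet> v \<le> norm (Dg 0) * norm v"
      by (rule norm_cauchy_schwarz)
    moreover have "g 0 \<le> g y0"
      using y0 \<open>0 \<le> R\<close> by simp
    ultimately show ?thesis
      by (simp add: power2_eq_square algebra_simps)
  qed (use y0 in simp)
  then show ?thesis
    by blast
qed

lemma strongly_concave_max_unique:
  assumes sc: "strongly_concave_on \<mu> UNIV g" and "0 < \<mu>"
    and max1: "\<forall>y. g y \<le> g y1" and max2: "\<forall>y. g y \<le> g y2"
  shows "y1 = y2"
proof -
  have "1/2 * g y1 + (1 - 1/2) * g y2 + \<mu> / 2 * (1/2) * (1 - 1/2) * (norm (y1 - y2))\<^sup>2
      \<le> g ((1/2) *\<^sub>R y1 + (1 - 1/2) *\<^sub>R y2)"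
    by (rule strongly_concave_onD[OF sc]) auto
  moreover have "g ((1/2) *\<^sub>R y1 + (1 - 1/2) *\<^sub>R y2) \<le> g y1" and "g y1 = g y2"
    using max1 max2 by (auto intro: order.antisym)
  ultimately have "\<mu> * (norm (y1 - y2))\<^sup>2 \<le> 0"
    by simp
  then show ?thesis
    using \<open>0 < \<mu>\<close> by (simp add: mult_le_0_iff)
qed

lemma argmax_y_is_max:
  fixes f :: "'a \<Rightarrow> 'b::euclidean_space \<Rightarrow> real"
  assumes sc: "strongly_concave_on \<mu> UNIV (f x)" and "0 < \<mu>"
    and dg: "\<And>y. (f x has_derivative (\<lambda>k. Dg y \<bullet> k)) (at y)"
  shows "f x y \<le> f x (argmax_y f x)"
proof -
  have "\<exists>!y. \<forall>y'. f x y' \<le> f x y"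
    using strongly_concave_has_max[OF sc \<open>0 < \<mu>\<close> dg]
      strongly_concave_max_unique[OF sc \<open>0 < \<mu>\<close>] by blast
  then have "\<forall>y'. f x y' \<le> f x (argmax_y f x)"
    unfolding argmax_y_def by (rule theI')
  then show ?thesis
    by blast
qed

lemma envelope_eq_argmax:
  "(\<And>y. f x y \<le> f x (argmax_y f x)) \<Longrightarrow> envelope f x = f x (argmax_y f x)"
  unfolding envelope_def by (rule cSup_eq_maximum) auto

lemma strongly_monotone_root_lipschitz:
  fixes F :: "'a::real_normed_vector \<Rightarrow> 'b::real_inner \<Rightarrow> 'b"
  assumes mono: "\<And>x u v. (F x v - F x u) \<bullet> (v - u) \<le> - \<mu> * (norm (v - u))\<^sup>2"
    and root: "\<And>x. F x (y x) = 0"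
    and lip: "\<And>x x' v. norm (F x v - F x' v) \<le> L * norm (x - x')"
    and "0 < \<mu>" "0 \<le> L"
  shows "norm (y x - y x') \<le> L / \<mu> * norm (x - x')"
proof -
  define d where "d = y x - y x'"
  have "(\<mu> * norm d) * norm d \<le> - ((F x (y x) - F x (y x')) \<bullet> d)"
    using mono[of x "y x" "y x'"] by (simp add: d_def power2_eq_square)
  also have "\<dots> = (F x (y x') - F x' (y x')) \<bullet> d"
    by (simp add: root inner_diff_left)
  also have "\<dots> \<le> norm (F x (y x') - F x' (y x')) * norm d"
    by (rule norm_cauchy_schwarz)
  also have "\<dots> \<le> (L * norm (x - x')) * norm d"
    by (simp add: lip mult_right_mono)
  finally have "\<mu> * norm d \<le> L * norm (x - x')"
    by (cases "d = 0") (use \<open>0 \<le> L\<close> in auto)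
  then show ?thesis
    using \<open>0 < \<mu>\<close> by (simp add: d_def field_simps)
qed

lemma implicit_function_has_derivative:
  fixes F :: "(real^'m) \<times> (real^'n) \<Rightarrow> real^'n" and y :: "real^'m \<Rightarrow> real^'n"
    and A :: "real^'m^'n" and B :: "real^'n^'n"
  assumes dF: "(F has_derivative (\<lambda>(h, k). A *v h + B *v k)) (at (x, y x))"
    and root: "\<And>x'. F (x', y x') = 0"
    and lip: "\<And>x'. norm (y x' - y x) \<le> K * norm (x' - x)"
    and "0 \<le> K" and inv: "invertible B"
  shows "(y has_derivative (\<lambda>h. - (matrix_inv B *v (A *v h)))) (at x)"
  unfolding has_derivative_at_alt
proof (intro conjI allI impI)
  show "bounded_linear (\<lambda>h. - (matrix_inv B *v (A *v h)))"
    by (simp add: bounded_linear_minus bounded_linear_compose)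
next
  fix e :: real assume "0 < e"
  define c where "c = spec_norm (matrix_inv B) + 1"
  have "0 < c"
    by (simp add: c_def add_nonneg_pos spec_norm_nonneg)
  then have "0 < e / (c * (1 + K))"
    using \<open>0 < e\<close> \<open>0 \<le> K\<close> by simp
  then obtain d where "0 < d" and d: "\<And>q. norm (q - (x, y x)) < d \<Longrightarrow>
      norm (F q - F (x, y x) - (\<lambda>(h, k). A *v h + B *v k) (q - (x, y x)))
        \<le> e / (c * (1 + K)) * norm (q - (x, y x))"
    using dF[unfolded has_derivative_at_alt] by meson
  show "\<exists>d>0. \<forall>x'. norm (x' - x) < d \<longrightarrow>
      norm (y x' - y x - - (matrix_inv B *v (A *v (x' - x)))) \<le> e * norm (x' - x)"
  proof (intro exI[of _ "d / (1 + K)"] conjI allI impI)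
    show "0 < d / (1 + K)"
      using \<open>0 < d\<close> \<open>0 \<le> K\<close> by simp
  next
    fix x' assume x': "norm (x' - x) < d / (1 + K)"
    define r where "r = A *v (x' - x) + B *v (y x' - y x)"
    have graph: "norm ((x', y x') - (x, y x)) \<le> (1 + K) * norm (x' - x)"
      using norm_Pair_le[of "x' - x" "y x' - y x"] lip[of x'] by (simp add: algebra_simps)
    also have "\<dots> < d"
      using x' \<open>0 \<le> K\<close> by (simp add: field_simps)
    finally have "norm r \<le> e / (c * (1 + K)) * norm ((x', y x') - (x, y x))"
      using d[of "(x', y x')"] norm_minus_cancel[of r] by (simp add: root r_def)
    also have "\<dots> \<le> e / (c * (1 + K)) * ((1 + K) * norm (x' - x))"
      by (rule mult_left_mono[OF graph less_imp_le]) fact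
    also have "\<dots> = e / c * norm (x' - x)"
      using \<open>0 < c\<close> \<open>0 \<le> K\<close> by simp
    finally have r: "c * norm r \<le> e * norm (x' - x)"
      using \<open>0 < c\<close> by (simp add: field_simps)
    have "y x' - y x - - (matrix_inv B *v (A *v (x' - x))) = matrix_inv B *v r"
      by (simp add: r_def matrix_vector_right_distrib matrix_vector_mul_assoc matrix_inv_left[OF inv])
    moreover have "norm (matrix_inv B *v r) \<le> c * norm r"
      using norm_matrix_vector_mult_le[of "matrix_inv B" r]
      by (simp add: c_def distrib_right add_increasing2)
    ultimately show "norm (y x' - y x - - (matrix_inv B *v (A *v (x' - x)))) \<le> e * norm (x' - x)"
      using r by (metis order_trans)
  qed
qed

locale strongly_concave_minimax =
  fixes f :: "real^'m \<Rightarrow> real^'n \<Rightarrow> real"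
    and g1 :: "real^'m \<Rightarrow> real^'n \<Rightarrow> real^'m"
    and g2 :: "real^'m \<Rightarrow> real^'n \<Rightarrow> real^'n"
    and H11 :: "real^'m \<Rightarrow> real^'n \<Rightarrow> real^'m^'m"
    and H12 :: "real^'m \<Rightarrow> real^'n \<Rightarrow> real^'n^'m"
    and H21 :: "real^'m \<Rightarrow> real^'n \<Rightarrow> real^'m^'n"
    and H22 :: "real^'m \<Rightarrow> real^'n \<Rightarrow> real^'n^'n"
    and L1 L2 \<mu> :: real
  assumes grad_f: "\<And>x y. ((\<lambda>(u, v). f u v) has_derivative
                     (\<lambda>(h, k). g1 x y \<bullet> h + g2 x y \<bullet> k)) (at (x, y))"
    and hess_1: "\<And>x y. ((\<lambda>(u, v). g1 u v) has_derivative
                     (\<lambda>(h, k). H11 x y *v h + H12 x y *v k)) (at (x, y))"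
    and hess_2: "\<And>x y. ((\<lambda>(u, v). g2 u v) has_derivative
                     (\<lambda>(h, k). H21 x y *v h + H22 x y *v k)) (at (x, y))"
    and lip_grad: "L1-lipschitz_on UNIV (\<lambda>(x, y). (g1 x y, g2 x y))"
    and mu_pos: "\<mu> > 0"
    and strong_conc: "\<And>x. strongly_concave_on \<mu> UNIV (\<lambda>y. f x y)"
    and lip_11: "\<And>x y x' y'. spec_norm (H11 x y - H11 x' y') \<le> L2 * norm ((x, y) - (x', y'))"
    and lip_12: "\<And>x y x' y'. spec_norm (H12 x y - H12 x' y') \<le> L2 * norm ((x, y) - (x', y'))"
    and lip_21: "\<And>x y x' y'. spec_norm (H21 x y - H21 x' y') \<le> L2 * norm ((x, y) - (x', y'))"
    and lip_22: "\<And>x y x' y'. spec_norm (H22 x y - H22 x' y') \<le> L2 * norm ((x, y) - (x', y'))"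
begin

abbreviation ystar :: "real^'m \<Rightarrow> real^'n" where
  "ystar \<equiv> argmax_y f"

definition schur :: "real^'m \<Rightarrow> real^'n \<Rightarrow> real^'m^'m" where
  "schur x y = H11 x y - H12 x y ** matrix_inv (H22 x y) ** H21 x y"

lemma L1_nonneg: "0 \<le> L1"
  using lip_grad by (rule lipschitz_on_nonneg)

lemma L2_nonneg: "0 \<le> L2"
proof -
  have "0 < norm ((0::real^'m, 0::real^'n) - (vec 1, 0))"
    by (simp add: vec_eq_iff)
  moreover have "0 \<le> L2 * norm ((0::real^'m, 0::real^'n) - (vec 1, 0))"
    using order_trans[OF spec_norm_nonneg lip_11] .
  ultimately show ?thesis
    by (simp add: zero_le_mult_iff)
qed

lemma f_partial_y: "(f x has_derivative (\<lambda>k. g2 x y \<bullet> k)) (at y)"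
  using has_derivative_partial_snd[OF grad_f] by simp

lemma g2_partial_y: "(g2 x has_derivative (\<lambda>k. H22 x y *v k)) (at y)"
  using has_derivative_partial_snd[OF hess_2] by simp

lemma g2_strongly_monotone: "(g2 x v - g2 x u) \<bullet> (v - u) \<le> - \<mu> * (norm (v - u))\<^sup>2"
  by (rule strongly_concave_gradient_monotone[OF strong_conc f_partial_y])

lemma f_le_argmax: "f x y \<le> f x (ystar x)"
  by (rule argmax_y_is_max[where f = f and x = x, OF strong_conc mu_pos f_partial_y])

lemma envelope_eq: "envelope f = (\<lambda>x. f x (ystar x))"
  by (simp add: fun_eq_iff envelope_eq_argmax f_le_argmax)

lemma g2_argmax: "g2 x (ystar x) = 0"
proof -
  have "eventually (\<lambda>y. f x y \<le> f x (ystar x)) (at (ystar x))"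
    by (simp add: f_le_argmax)
  then have "(\<lambda>k. g2 x (ystar x) \<bullet> k) = (\<lambda>k. 0)"
    by (rule has_derivative_local_max[OF f_partial_y])
  then have "g2 x (ystar x) \<bullet> g2 x (ystar x) = 0"
    by meson
  then show ?thesis
    by simp
qed

lemma H22_norm_ge: "\<mu> * norm v \<le> norm (H22 x y *v v)"
  by (rule norm_ge_of_inner_le[OF strongly_monotone_derivative_le[OF g2_strongly_monotone g2_partial_y[of x y]]])

lemma H22_invertible: "invertible (H22 x y)"
  by (rule invertible_of_norm_lower_bound[OF mu_pos H22_norm_ge])

lemma spec_norm_inv_H22_le: "spec_norm (matrix_inv (H22 x y)) \<le> 1 / \<mu>"
  by (rule spec_norm_matrix_inv_le[OF mu_pos H22_norm_ge])

lemma gradient_has_derivative: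
  "((\<lambda>(x, y). (g1 x y, g2 x y)) has_derivative
     (\<lambda>(h, k). (H11 x y *v h + H12 x y *v k, H21 x y *v h + H22 x y *v k))) (at (x, y))"
  using has_derivative_Pair[OF hess_1 hess_2] by (simp add: case_prod_beta')

lemma spec_norm_H12_le: "spec_norm (H12 x y) \<le> L1"
proof (rule spec_norm_le)
  fix k
  have "norm (H12 x y *v k, H22 x y *v k) \<le> L1 * norm k"
    using lipschitz_on_UNIV_derivative_le[OF gradient_has_derivative lip_grad, where w = "(0, k)"]
    by (simp add: norm_Pair)
  then show "norm (H12 x y *v k) \<le> L1 * norm k"
    using norm_fst_le[where x = "H12 x y *v k" and y = "H22 x y *v k"] by simp
qed

lemma spec_norm_H21_le: "spec_norm (H21 x y) \<le> L1"
proof (rule spec_norm_le)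
  fix h
  have "norm (H11 x y *v h, H21 x y *v h) \<le> L1 * norm h"
    using lipschitz_on_UNIV_derivative_le[OF gradient_has_derivative lip_grad, where w = "(h, 0)"]
    by (simp add: norm_Pair)
  then show "norm (H21 x y *v h) \<le> L1 * norm h"
    using norm_snd_le[where x = "H11 x y *v h" and y = "H21 x y *v h"] by simp
qed

lemma g2_lipschitz_x: "norm (g2 x y - g2 x' y) \<le> L1 * norm (x - x')"
proof -
  have "norm (g1 x y - g1 x' y, g2 x y - g2 x' y) \<le> L1 * norm (x - x')"
    using lipschitz_onD[OF lip_grad, of "(x, y)" "(x', y)"] by (simp add: dist_norm norm_Pair)
  then show ?thesis
    using norm_snd_le[where x = "g1 x y - g1 x' y" and y = "g2 x y - g2 x' y"] by simp
qed

lemma argmax_lipschitz: "norm (ystar x - ystar x') \<le> L1 / \<mu> * norm (x - x')"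
  by (rule strongly_monotone_root_lipschitz[OF g2_strongly_monotone g2_argmax g2_lipschitz_x mu_pos L1_nonneg])

lemma argmax_has_derivative:
  "(ystar has_derivative (\<lambda>h. - (matrix_inv (H22 x (ystar x)) *v (H21 x (ystar x) *v h)))) (at x)"
proof (rule implicit_function_has_derivative)
  show "((\<lambda>(u, v). g2 u v) has_derivative
      (\<lambda>(h, k). H21 x (ystar x) *v h + H22 x (ystar x) *v k)) (at (x, ystar x))"
    by (rule hess_2)
  show "(\<lambda>(u, v). g2 u v) (x', ystar x') = 0" for x'
    by (simp add: g2_argmax)
  show "norm (ystar x' - ystar x) \<le> L1 / \<mu> * norm (x' - x)" for x'
    by (rule argmax_lipschitz)
  show "0 \<le> L1 / \<mu>"
    using L1_nonneg mu_pos by simp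
  show "invertible (H22 x (ystar x))"
    by (rule H22_invertible)
qed

lemma argmax_graph_has_derivative:
  "((\<lambda>x. (x, ystar x)) has_derivative
     (\<lambda>h. (h, - (matrix_inv (H22 x (ystar x)) *v (H21 x (ystar x) *v h))))) (at x)"
  by (rule has_derivative_Pair[OF has_derivative_ident argmax_has_derivative])

lemma envelope_has_derivative: "(envelope f has_derivative (\<lambda>h. g1 x (ystar x) \<bullet> h)) (at x)"
  using has_derivative_compose[OF argmax_graph_has_derivative grad_f]
  by (simp add: envelope_eq g2_argmax)

lemma envelope_gradient_has_derivative:
  "((\<lambda>x. g1 x (ystar x)) has_derivative (\<lambda>h. schur x (ystar x) *v h)) (at x)"
  using has_derivative_compose[OF argmax_graph_has_derivative hess_1]
  by (simp add: schur_def matrix_vector_mult_diff_rdistrib matrix_vector_mult_uminus_right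
      flip: matrix_vector_mul_assoc)

lemma schur_lipschitz:
  "spec_norm (schur x y - schur x' y') \<le> L2 * (1 + L1 / \<mu>)\<^sup>2 * norm ((x, y) - (x', y'))"
proof -
  have "spec_norm (schur x y - schur x' y') \<le> L2 * norm ((x, y) - (x', y')) * (1 + 1 / \<mu> * L1)\<^sup>2"
    unfolding schur_def
    by (rule spec_norm_schur_complement_diff_le[OF H22_invertible H22_invertible
          lip_11 lip_12 lip_22 lip_21 spec_norm_inv_H22_le spec_norm_inv_H22_le
          spec_norm_H12_le spec_norm_H21_le])
  then show ?thesis
    by (simp add: mult_ac)
qed

lemma schur_argmax_lipschitz:
  "spec_norm (schur x (ystar x) - schur x' (ystar x')) \<le> L2 * (1 + L1 / \<mu>) ^ 3 * norm (x - x')"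
proof -
  have graph: "norm ((x, ystar x) - (x', ystar x')) \<le> (1 + L1 / \<mu>) * norm (x - x')"
    using norm_Pair_le[of "x - x'" "ystar x - ystar x'"] argmax_lipschitz[of x x']
    by (simp add: algebra_simps)
  have "spec_norm (schur x (ystar x) - schur x' (ystar x'))
      \<le> L2 * (1 + L1 / \<mu>)\<^sup>2 * norm ((x, ystar x) - (x', ystar x'))"
    by (rule schur_lipschitz)
  also have "\<dots> \<le> L2 * (1 + L1 / \<mu>)\<^sup>2 * ((1 + L1 / \<mu>) * norm (x - x'))"
    using graph L2_nonneg by (simp add: mult_left_mono)
  also have "\<dots> = L2 * (1 + L1 / \<mu>) ^ 3 * norm (x - x')"
    by (simp add: power2_eq_square power3_eq_cube)
  finally show ?thesis .
qed

end

theorem proposition2: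
  fixes f :: "real^'m \<Rightarrow> real^'n \<Rightarrow> real"
    and g1 :: "real^'m \<Rightarrow> real^'n \<Rightarrow> real^'m"
    and g2 :: "real^'m \<Rightarrow> real^'n \<Rightarrow> real^'n"
    and H11 :: "real^'m \<Rightarrow> real^'n \<Rightarrow> real^'m^'m"
    and H12 :: "real^'m \<Rightarrow> real^'n \<Rightarrow> real^'n^'m"
    and H21 :: "real^'m \<Rightarrow> real^'n \<Rightarrow> real^'m^'n"
    and H22 :: "real^'m \<Rightarrow> real^'n \<Rightarrow> real^'n^'n"
    and L1 L2 \<mu> :: real
  assumes grad_f: "\<And>x y. ((\<lambda>(u, v). f u v) has_derivative
                     (\<lambda>(h, k). g1 x y \<bullet> h + g2 x y \<bullet> k)) (at (x, y))"
    and hess_1: "\<And>x y. ((\<lambda>(u, v). g1 u v) has_derivative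
                     (\<lambda>(h, k). H11 x y *v h + H12 x y *v k)) (at (x, y))"
    and hess_2: "\<And>x y. ((\<lambda>(u, v). g2 u v) has_derivative
                     (\<lambda>(h, k). H21 x y *v h + H22 x y *v k)) (at (x, y))"
    and cont_11: "continuous_on UNIV (\<lambda>(x, y). H11 x y)"
    and cont_12: "continuous_on UNIV (\<lambda>(x, y). H12 x y)"
    and cont_21: "continuous_on UNIV (\<lambda>(x, y). H21 x y)"
    and cont_22: "continuous_on UNIV (\<lambda>(x, y). H22 x y)"
    and lip_grad: "L1-lipschitz_on UNIV (\<lambda>(x, y). (g1 x y, g2 x y))"
    and mu_pos: "\<mu> > 0"
    and strong_conc: "\<And>x. strongly_concave_on \<mu> UNIV (\<lambda>y. f x y)"
    and lip_11: "\<And>x y x' y'. spec_norm (H11 x y - H11 x' y') \<le> L2 * norm ((x, y) - (x', y'))"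
    and lip_12: "\<And>x y x' y'. spec_norm (H12 x y - H12 x' y') \<le> L2 * norm ((x, y) - (x', y'))"
    and lip_21: "\<And>x y x' y'. spec_norm (H21 x y - H21 x' y') \<le> L2 * norm ((x, y) - (x', y'))"
    and lip_22: "\<And>x y x' y'. spec_norm (H22 x y - H22 x' y') \<le> L2 * norm ((x, y) - (x', y'))"
    and Phi_bdd: "bdd_below (range (envelope f))"
    and Phi_sublevel: "\<And>c. compact {x. envelope f x \<le> c}"
  defines "\<kappa> \<equiv> L1 / \<mu>"
    and "G \<equiv> (\<lambda>x y. H11 x y - H12 x y ** matrix_inv (H22 x y) ** H21 x y)"
  shows "(\<forall>x y x' y'. spec_norm (G x y - G x' y')
            \<le> L2 * (1 + \<kappa>)\<^sup>2 * norm ((x, y) - (x', y')))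
       \<and> (\<exists>gPhi :: real^'m \<Rightarrow> real^'m.
            (\<forall>x. (envelope f has_derivative (\<lambda>h. gPhi x \<bullet> h)) (at x))
          \<and> (\<forall>x. (gPhi has_derivative (\<lambda>h. G x (argmax_y f x) *v h)) (at x))
          \<and> (\<forall>x x'. spec_norm (G x (argmax_y f x) - G x' (argmax_y f x'))
                 \<le> L2 * (1 + \<kappa>) ^ 3 * norm (x - x')))"
proof -
  interpret strongly_concave_minimax f g1 g2 H11 H12 H21 H22 L1 L2 \<mu>
    by (rule strongly_concave_minimax.intro) fact+
  have "G = schur"
    unfolding G_def by (simp add: fun_eq_iff schur_def)
  show ?thesis
    unfolding \<open>G = schur\<close> \<kappa>_def
    by (intro conjI allI exI[of _ "\<lambda>x. g1 x (ystar x)"] schur_lipschitz schur_argmax_lipschitz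
        envelope_has_derivative envelope_gradient_has_derivative)
qed

end
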